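(* Let $c,d,d_1,d_2\in\mathbb{Z}$ and $T=T(c,d,d_1,d_2)$, i.e. $T_{r,k}=c+kd_1+rd_2+rkd$ for all $r,k\ge 0$. (i) (Odd Diamond Pattern) For all integers $r,k\ge 0$ and $n\ge 1$, $$\frac{\sum_{i=0}^{2n-1}T_{r+i,k}+\sum_{i=0}^{2n-1}T_{r+2n,k+i}+\sum_{i=0}^{2n-1}T_{r+2n-i,k+2n}+\sum_{i=0}^{2n-1}T_{r,k+2n-i}}{8n}=T_{r+n,k+n};$$ that is, the average of the $8n$ entries on the boundary of the diamond with corners $T_{r,k},T_{r+2n,k},T_{r+2n,k+2n},T_{r,k+2n}$ equals its middle entry. (ii) (Even Diamond Pattern) For all integers $r,k\ge 0$ and $n\ge 1$ with $n\le\min\{r,k\}$, $$\frac{\sum_{i=0}^{2n-2}\left(T_{r-n+1+i,\,k-n+1}+T_{r+n,\,k-n+1+i}+T_{r+n-i,\,k+n}+T_{r-n+1,\,k+n-i}\right)}{8n-4}=\frac{T_{r,k}+T_{r+1,k}+T_{r+1,k+1}+T_{r,k+1}}{4};$$ that is, the average of the $8n-4$ entries on the boundary of the diamond with corners $T_{r-n+1,k-n+1},T_{r+n,k-n+1},T_{r+n,k+n},T_{r-n+1,k+n}$ equals the average of the four entries $T_{r,k},T_{r+1,k},T_{r+1,k+1},T_{r,k+1}$.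
   Context: A number triangle is an array of integers $T_{r,k}$ indexed by integers $r,k\ge 0$ ($T_{r,k}$ the $k$-th entry of the $r$-th major diagonal). For $c,d,d_1,d_2\in\mathbb{Z}$, the Generalized Rascal Triangle $T(c,d,d_1,d_2)$ is the number triangle with $T_{r,k}=c+kd_1+rd_2+rkd$. *)

theory Defs
  imports Complex_Main
begin

definition rascalT :: "int \<Rightarrow> int \<Rightarrow> int \<Rightarrow> int \<Rightarrow> nat \<Rightarrow> nat \<Rightarrow> int" where
  "rascalT c d d1 d2 r k = c + int k * d1 + int r * d2 + int r * int k * d"

end

theory Submission
  imports Defs
begin

text \<open>Each entry T r k is affine in r for fixed k and affine in k for fixed r, so along every side
  of a diamond the entries form an arithmetic progression. Pairing the i-th term with the i-th term
  from the end (Gauss) turns each side sum into the number of terms times the mean of its two end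
  entries. What remains is a polynomial identity among the end entries.\<close>

lemma sum_atLeastAtMost_by_pairing:
  fixes f :: "nat \<Rightarrow> 'a::comm_semiring_1"
  assumes "\<And>i. i \<le> m \<Longrightarrow> f i + f (m - i) = f 0 + f m"
  shows "2 * (\<Sum>i=0..m. f i) = of_nat (Suc m) * (f 0 + f m)"
proof -
  have "2 * (\<Sum>i=0..m. f i) = (\<Sum>i=0..m. f i) + (\<Sum>i=0..m. f (m - i))"
    using sum.atLeastAtMost_rev[of f 0 m] by (simp add: mult_2)
  also have "\<dots> = (\<Sum>i=0..m. f 0 + f m)"
    by (simp add: sum.distrib[symmetric] assms)
  finally show ?thesis by simp
qed

lemma rascalT_add_row:
  "rascalT c d d1 d2 a k + rascalT c d d1 d2 b k
     = 2 * c + 2 * int k * d1 + int (a + b) * (d2 + int k * d)"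
  by (simp add: rascalT_def algebra_simps)

lemma rascalT_add_col:
  "rascalT c d d1 d2 r a + rascalT c d d1 d2 r b
     = 2 * c + 2 * int r * d2 + int (a + b) * (d1 + int r * d)"
  by (simp add: rascalT_def algebra_simps)

lemma rascalT_odd_diamond_boundary:
  fixes c d d1 d2 :: int
  defines "T \<equiv> rascalT c d d1 d2"
  assumes "n \<ge> 1"
  shows "(\<Sum>i=0..2*n-1. T (r+i) k) + (\<Sum>i=0..2*n-1. T (r+2*n) (k+i))
           + (\<Sum>i=0..2*n-1. T (r+2*n-i) (k+2*n)) + (\<Sum>i=0..2*n-1. T r (k+2*n-i))
         = int (8*n) * T (r+n) (k+n)"
proof -
  let ?m = "2*n-1"
  have bottom: "2 * (\<Sum>i=0..?m. T (r+i) k) = int (2*n) * (T r k + T (r+?m) k)"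
    by (rule sum_atLeastAtMost_by_pairing[THEN trans])
      (use assms in \<open>simp_all add: T_def rascalT_add_row\<close>)
  have right: "2 * (\<Sum>i=0..?m. T (r+2*n) (k+i))
      = int (2*n) * (T (r+2*n) k + T (r+2*n) (k+?m))"
    by (rule sum_atLeastAtMost_by_pairing[THEN trans])
      (use assms in \<open>simp_all add: T_def rascalT_add_col\<close>)
  have top: "2 * (\<Sum>i=0..?m. T (r+2*n-i) (k+2*n))
      = int (2*n) * (T (r+2*n) (k+2*n) + T (r+1) (k+2*n))"
    by (rule sum_atLeastAtMost_by_pairing[THEN trans])
      (use assms in \<open>simp_all add: T_def rascalT_add_row\<close>)
  have left: "2 * (\<Sum>i=0..?m. T r (k+2*n-i)) = int (2*n) * (T r (k+2*n) + T r (k+1))"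
    by (rule sum_atLeastAtMost_by_pairing[THEN trans])
      (use assms in \<open>simp_all add: T_def rascalT_add_col\<close>)
  from assms obtain p where "n = Suc p" by (cases n) auto
  with bottom right top left show ?thesis
    by (simp add: T_def rascalT_def algebra_simps)
qed

lemma rascalT_even_diamond_boundary:
  fixes c d d1 d2 :: int
  defines "T \<equiv> rascalT c d d1 d2"
  assumes "n \<ge> 1" "n \<le> r" "n \<le> k"
  shows "4 * (\<Sum>i=0..2*n-2. T (r-n+1+i) (k-n+1) + T (r+n) (k-n+1+i)
                + T (r+n-i) (k+n) + T (r-n+1) (k+n-i))
         = int (8*n-4) * (T r k + T (r+1) k + T (r+1) (k+1) + T r (k+1))"
proof -
  let ?m = "2*n-2"
  have bottom: "2 * (\<Sum>i=0..?m. T (r-n+1+i) (k-n+1))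
      = int (2*n-1) * (T (r-n+1) (k-n+1) + T (r+n-1) (k-n+1))"
    by (rule sum_atLeastAtMost_by_pairing[THEN trans])
      (use assms in \<open>simp_all add: T_def rascalT_add_row\<close>)
  have right: "2 * (\<Sum>i=0..?m. T (r+n) (k-n+1+i))
      = int (2*n-1) * (T (r+n) (k-n+1) + T (r+n) (k+n-1))"
    by (rule sum_atLeastAtMost_by_pairing[THEN trans])
      (use assms in \<open>simp_all add: T_def rascalT_add_col\<close>)
  have top: "2 * (\<Sum>i=0..?m. T (r+n-i) (k+n))
      = int (2*n-1) * (T (r+n) (k+n) + T (r-n+2) (k+n))"
    by (rule sum_atLeastAtMost_by_pairing[THEN trans])
      (use assms in \<open>simp_all add: T_def rascalT_add_row\<close>)
  have left: "2 * (\<Sum>i=0..?m. T (r-n+1) (k+n-i))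
      = int (2*n-1) * (T (r-n+1) (k+n) + T (r-n+1) (k-n+2))"
    by (rule sum_atLeastAtMost_by_pairing[THEN trans])
      (use assms in \<open>simp_all add: T_def rascalT_add_col\<close>)
  obtain r0 k0 where "r = r0 + n" "k = k0 + n"
    using assms by (metis le_add_diff_inverse2)
  moreover from assms obtain p where "n = Suc p" by (cases n) auto
  ultimately show ?thesis
    using bottom right top left by (simp add: sum.distrib T_def rascalT_def algebra_simps)
qed

theorem mainTheorem9:
  fixes c d d1 d2 :: int
  defines "T \<equiv> rascalT c d d1 d2"
  shows "(\<forall>r k n::nat. n \<ge> 1 \<longrightarrow>
            (of_int ((\<Sum>i=0..2*n-1. T (r+i) k) + (\<Sum>i=0..2*n-1. T (r+2*n) (k+i))
                   + (\<Sum>i=0..2*n-1. T (r+2*n-i) (k+2*n)) + (\<Sum>i=0..2*n-1. T r (k+2*n-i))) :: real)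
              / of_nat (8*n) = of_int (T (r+n) (k+n)))
       \<and> (\<forall>r k n::nat. n \<ge> 1 \<and> n \<le> min r k \<longrightarrow>
            (of_int (\<Sum>i=0..2*n-2. T (r-n+1+i) (k-n+1) + T (r+n) (k-n+1+i)
                   + T (r+n-i) (k+n) + T (r-n+1) (k+n-i)) :: real) / of_nat (8*n-4)
            = of_int (T r k + T (r+1) k + T (r+1) (k+1) + T r (k+1)) / 4)"
proof (intro conjI allI impI)
  fix r k n :: nat
  assume "n \<ge> 1"
  then show "(of_int ((\<Sum>i=0..2*n-1. T (r+i) k) + (\<Sum>i=0..2*n-1. T (r+2*n) (k+i))
                   + (\<Sum>i=0..2*n-1. T (r+2*n-i) (k+2*n)) + (\<Sum>i=0..2*n-1. T r (k+2*n-i))) :: real)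
              / of_nat (8*n) = of_int (T (r+n) (k+n))"
    unfolding T_def rascalT_odd_diamond_boundary[OF \<open>n \<ge> 1\<close>] by simp
next
  fix r k n :: nat
  assume "n \<ge> 1 \<and> n \<le> min r k"
  then have bounds: "n \<ge> 1" "n \<le> r" "n \<le> k" by simp_all
  have boundary_eq: "4 * (\<Sum>i=0..2*n-2. T (r-n+1+i) (k-n+1) + T (r+n) (k-n+1+i)
                + T (r+n-i) (k+n) + T (r-n+1) (k+n-i))
        = int (8*n-4) * (T r k + T (r+1) k + T (r+1) (k+1) + T r (k+1))"
    (is "4 * ?boundary = _ * ?square")
    unfolding T_def by (rule rascalT_even_diamond_boundary[OF bounds])
  have "4 * (of_int ?boundary :: real) = of_nat (8*n-4) * of_int ?square"
    using arg_cong[OF boundary_eq, of "of_int :: int \<Rightarrow> real"]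
    by (simp only: of_int_mult of_int_numeral of_int_of_nat_eq)
  moreover have "(of_nat (8*n-4) :: real) > 0"
    using bounds by simp
  ultimately show "(of_int ?boundary :: real) / of_nat (8*n-4) = of_int ?square / 4"
    by (simp only: divide_eq_eq) (simp add: algebra_simps)
qed

end
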